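(* Let constants $C>0$ and $r>0$ be given. For every pair of positive integers $M,n$, let $\boldsymbol{x}_1,\dots,\boldsymbol{x}_M$ be random points that are continuously distributed in the unit ball $\mathbb{B}_n\subset\mathbb{R}^n$, and assume that their conditional densities satisfy $$\rho_n(\boldsymbol{x}_i \mid \boldsymbol{x}_j=\boldsymbol{y}_j,\ \forall j\neq i)\le \frac{C}{r^n V_n(\mathbb{B}_n)}$$ for every $n$, every index $i\in\{1,\dots,M\}$ and all points $\boldsymbol{y}_1,\dots,\boldsymbol{y}_{i-1},\boldsymbol{y}_{i+1},\dots,\boldsymbol{y}_M\in\mathbb{R}^n$. Then this family of joint distributions has the SmAC property with the same constant $C$, with any $B\in(0,1)$, and with $A=Br$.
   Context: $\mathbb{B}_n$ is the unit ball in $\mathbb{R}^n$ and $V_n$ is $n$-dimensional Lebesgue measure. We consider a family of joint distributions of $\boldsymbol{x}_1,\dots,\boldsymbol{x}_M\in\mathbb{R}^n$, one for each pair of positive integers $(M,n)$. This family has the SmAC (Smeared Absolute Continuity) property if there exist constants $A>0$, $B\in(0,1)$, $C>0$ (independent of $M$ and $n$) such that for every positive integer $n$, every convex set $S\subset\mathbb{R}^n$ with $V_n(S)/V_n(\mathbb{B}_n)\le A^n$, every index $i\in\{1,\dots,M\}$, and all points $\boldsymbol{y}_1,\dots,\boldsymbol{y}_{i-1},\boldsymbol{y}_{i+1},\dots,\boldsymbol{y}_M\in\mathbb{R}^n$, $$\mathbb{P}(\boldsymbol{x}_i\in\mathbb{B}_n\setminus S \mid \boldsymbol{x}_j=\boldsymbol{y}_j,\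 \forall j\neq i)\ge 1-CB^n.$$ *)

theory Defs
  imports "HOL-Analysis.Analysis"
begin

text \<open>A configuration of M points in R^n is an element of real^'n^'m:
  the i-th point is x$i. Dimension n = CARD('n), number of points M = CARD('m).\<close>

definition upd_pt :: "real^'n^'m \<Rightarrow> 'm \<Rightarrow> real^'n \<Rightarrow> real^'n^'m" where
  "upd_pt y i z = (\<chi> j. if j = i then z else y $ j)"

definition joint_density_in_ball :: "(real^'n^'m \<Rightarrow> real) \<Rightarrow> bool" where
  "joint_density_in_ball f \<longleftrightarrow>
     f \<in> borel_measurable lborel \<and> (\<forall>x. 0 \<le> f x) \<and>
     (\<integral>\<^sup>+ x. ennreal (f x) \<partial>lborel) = 1 \<and>
     (\<forall>x. (\<exists>i. x $ i \<notin> ball 0 1) \<longrightarrow> f x = 0)"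

definition cond_norm :: "(real^'n^'m \<Rightarrow> real) \<Rightarrow> 'm \<Rightarrow> real^'n^'m \<Rightarrow> ennreal" where
  "cond_norm f i y = (\<integral>\<^sup>+ z. ennreal (f (upd_pt y i z)) \<partial>lebesgue)"

definition cond_defined :: "(real^'n^'m \<Rightarrow> real) \<Rightarrow> 'm \<Rightarrow> real^'n^'m \<Rightarrow> bool" where
  "cond_defined f i y \<longleftrightarrow> 0 < cond_norm f i y \<and> cond_norm f i y < \<infinity>"

definition cond_density :: "(real^'n^'m \<Rightarrow> real) \<Rightarrow> 'm \<Rightarrow> real^'n^'m \<Rightarrow> real^'n \<Rightarrow> real" where
  "cond_density f i y z = f (upd_pt y i z) / enn2real (cond_norm f i y)"

definition cond_prob :: "(real^'n^'m \<Rightarrow> real) \<Rightarrow> 'm \<Rightarrow> real^'n^'m \<Rightarrow> (real^'n) set \<Rightarrow> real" where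
  "cond_prob f i y T =
     enn2real (\<integral>\<^sup>+ z\<in>T. ennreal (f (upd_pt y i z)) \<partial>lebesgue) / enn2real (cond_norm f i y)"

definition smac_with :: "real \<Rightarrow> real \<Rightarrow> real \<Rightarrow> (real^'n^'m \<Rightarrow> real) \<Rightarrow> bool" where
  "smac_with A B C f \<longleftrightarrow>
     0 < A \<and> 0 < B \<and> B < 1 \<and> 0 < C \<and>
     (\<forall>S :: (real^'n) set. \<forall>i y.
        convex S \<and>
        emeasure lebesgue S \<le> ennreal (A ^ CARD('n)) * emeasure lebesgue (ball (0::real^'n) 1) \<and>
        cond_defined f i y \<longrightarrow>
        cond_prob f i y (ball 0 1 - S) \<ge> 1 - C * B ^ CARD('n))"

end

theory Submission
  imports Defs
begin

text \<open>Given the other points, a density bounded by \<open>D\<close> gives a Lebesgue measurable set \<open>S\<close>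
  conditional probability at most \<open>D \<cdot> V\<^sub>n(S)\<close>. With \<open>D = C / (r\<^sup>n V\<^sub>n(\<bbbB>\<^sub>n))\<close> and
  \<open>V\<^sub>n(S) \<le> (B r)\<^sup>n V\<^sub>n(\<bbbB>\<^sub>n)\<close> this is \<open>C B\<^sup>n\<close>; the remaining mass lies in \<open>\<bbbB>\<^sub>n - S\<close>
  because the density vanishes outside the ball. Convexity of \<open>S\<close> is used only for measurability.\<close>

lemma lebesgue_sets_convex:
  fixes S :: "'a::euclidean_space set"
  assumes "convex S"
  shows "S \<in> sets lebesgue"
proof -
  have "S = (\<Union>k::nat. S \<inter> ball 0 (real k))"
    using reals_Archimedean2 by (auto simp: dist_norm)
  moreover have "S \<inter> ball 0 (real k) \<in> sets lebesgue" for k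
    using measurable_convex[of "S \<inter> ball 0 (real k)"] assms
    by (simp add: convex_Int fmeasurableD bounded_Int)
  moreover have "(\<Union>k::nat. S \<inter> ball 0 (real k)) \<in> sets lebesgue"
    using calculation(2) by (intro sets.countable_UN') auto
  ultimately show ?thesis by simp
qed

lemma set_nn_integral_diff_ge:
  fixes g :: "'a \<Rightarrow> real"
  assumes g_meas: "g \<in> borel_measurable M"
    and g_bounds: "\<And>z. 0 \<le> g z" "\<And>z. g z \<le> c"
    and g_support: "\<And>z. z \<notin> K \<Longrightarrow> g z = 0"
    and sets: "K \<in> sets M" "S \<in> sets M"
    and finite: "(\<integral>\<^sup>+ z. g z \<partial>M) < \<infinity>"
    and small: "emeasure M S \<le> ennreal s" "0 \<le> s"
  shows "enn2real (\<integral>\<^sup>+ z. g z \<partial>M) - c * s \<le> enn2real (\<integral>\<^sup>+ z \<in> K - S. g z \<partial>M)"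
proof -
  define X where "X = (\<integral>\<^sup>+ z \<in> K - S. g z \<partial>M)"
  define Y where "Y = (\<integral>\<^sup>+ z \<in> K \<inter> S. g z \<partial>M)"
  have "0 \<le> c"
    using g_bounds order_trans by blast
  have "(\<integral>\<^sup>+ z. g z \<partial>M) = (\<integral>\<^sup>+ z \<in> (K - S) \<union> (K \<inter> S). g z \<partial>M)"
    by (intro nn_integral_cong) (auto simp: indicator_def g_support)
  also have "\<dots> = X + Y"
    unfolding X_def Y_def using g_meas sets by (intro nn_integral_disjoint_pair) auto
  finally have total: "(\<integral>\<^sup>+ z. g z \<partial>M) = X + Y" .
  have "Y \<le> (\<integral>\<^sup>+ z. ennreal c * indicator S z \<partial>M)"
    unfolding Y_def by (intro nn_integral_mono) (auto simp: indicator_def g_bounds ennreal_leI)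
  also have "\<dots> = ennreal c * emeasure M S"
    using sets(2) by (rule nn_integral_cmult_indicator)
  also have "\<dots> \<le> ennreal (c * s)"
    using small \<open>0 \<le> c\<close> by (simp add: ennreal_mult mult_left_mono)
  finally have "enn2real Y \<le> c * s"
    using small \<open>0 \<le> c\<close> by (simp add: enn2real_leI)
  moreover have "enn2real (\<integral>\<^sup>+ z. g z \<partial>M) = enn2real X + enn2real Y"
    using finite unfolding total by (intro enn2real_plus) auto
  ultimately show ?thesis
    unfolding X_def by linarith
qed

lemma borel_measurable_upd_pt_section:
  assumes "f \<in> borel_measurable lborel"
  shows "(\<lambda>z. f (upd_pt y i z)) \<in> borel_measurable lebesgue"
proof -
  have "continuous_on UNIV (upd_pt y i)"
    unfolding upd_pt_def
    by (intro continuous_on_vec_lambda, case_tac "j = i") (simp_all add: continuous_on_id)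
  then have "upd_pt y i \<in> borel_measurable borel"
    by (rule borel_measurable_continuous_onI)
  then have "(\<lambda>z. f (upd_pt y i z)) \<in> borel_measurable borel"
    using assms by (simp add: measurable_compose_rev)
  then show ?thesis
    by (intro measurable_completion) simp
qed

lemma cond_prob_diff_ge:
  fixes f :: "real^'n^'m \<Rightarrow> real"
  assumes f: "joint_density_in_ball f"
    and defined: "cond_defined f i y"
    and density_le: "\<And>z. cond_density f i y z \<le> D"
    and S: "S \<in> sets lebesgue" "emeasure lebesgue S \<le> ennreal s" "0 \<le> s"
  shows "1 - D * s \<le> cond_prob f i y (ball 0 1 - S)"
proof -
  define g where "g z = f (upd_pt y i z)" for z
  define N where "N = enn2real (cond_norm f i y)"
  have norm_finite: "cond_norm f i y < \<infinity>" and "0 < N"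
    using defined unfolding cond_defined_def N_def by (auto simp: enn2real_positive_iff)
  have f_props: "f \<in> borel_measurable lborel" "\<And>x. 0 \<le> f x"
    "\<And>x. (\<exists>j. x $ j \<notin> ball 0 1) \<Longrightarrow> f x = 0"
    using f unfolding joint_density_in_ball_def by auto
  have "g z \<le> D * N" for z
    using density_le[of z] \<open>0 < N\<close>
    unfolding cond_density_def g_def N_def by (simp add: divide_le_eq mult.commute)
  moreover have "g z = 0" if "z \<notin> ball 0 1" for z
    unfolding g_def using that by (intro f_props(3)) (auto simp: upd_pt_def)
  ultimately have "N - D * N * s \<le> enn2real (\<integral>\<^sup>+ z \<in> ball 0 1 - S. g z \<partial>lebesgue)"
    using set_nn_integral_diff_ge[of g lebesgue "D * N" "ball 0 1" S s] S norm_finite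
      borel_measurable_upd_pt_section[OF f_props(1)] f_props(2)
    unfolding N_def cond_norm_def g_def by auto
  then have "(1 - D * s) * N \<le> enn2real (\<integral>\<^sup>+ z \<in> ball 0 1 - S. g z \<partial>lebesgue)"
    by (simp add: algebra_simps)
  then show ?thesis
    using \<open>0 < N\<close> unfolding cond_prob_def g_def N_def by (simp add: le_divide_eq)
qed

theorem proposition1:
  fixes f :: "real^'n^'m \<Rightarrow> real" and C r B :: real
  assumes "0 < C" and "0 < r" and "0 < B" and "B < 1"
    and "joint_density_in_ball f"
    and "\<forall>i y z. cond_defined f i y \<longrightarrow>
           cond_density f i y z \<le> C / (r ^ CARD('n) * measure lebesgue (ball (0::real^'n) 1))"
  shows "smac_with (B * r) B C f"
  unfolding smac_with_def
proof (intro conjI allI impI)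
  show "0 < B * r" "0 < B" "B < 1" "0 < C"
    using assms by auto
  define V where "V = measure lebesgue (ball (0::real^'n) 1)"
  have "0 < V"
    unfolding V_def using content_ball_pos[of 1 "0::real^'n"] by (simp add: measure_completion)
  have ball_volume: "emeasure lebesgue (ball (0::real^'n) 1) = ennreal V"
    unfolding V_def by (rule emeasure_eq_measure2) simp
  fix S :: "(real^'n) set" and i y
  assume "convex S \<and>
    emeasure lebesgue S \<le> ennreal ((B * r) ^ CARD('n)) * emeasure lebesgue (ball (0::real^'n) 1) \<and>
    cond_defined f i y"
  then have "1 - C / (r ^ CARD('n) * V) * ((B * r) ^ CARD('n) * V) \<le> cond_prob f i y (ball 0 1 - S)"
    using assms \<open>0 < V\<close>
    by (intro cond_prob_diff_ge) (auto simp: lebesgue_sets_convex ball_volume ennreal_mult V_def)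
  moreover have "C / (r ^ CARD('n) * V) * ((B * r) ^ CARD('n) * V) = C * B ^ CARD('n)"
    using assms \<open>0 < V\<close> by (simp add: power_mult_distrib field_simps)
  ultimately show "1 - C * B ^ CARD('n) \<le> cond_prob f i y (ball 0 1 - S)"
    by simp
qed

end
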